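(* Let $\mathcal M_{int}$ be the set of triplets $(T,I,F)$ of nonempty intervals (open, half-open or closed) contained in $[0,1]$; write $T^L=\inf T$, $T^U=\sup T$, and similarly $I^L,I^U,F^L,F^U$. Define for $P=(T,I,F)\in\mathcal M_{int}$ $$s(P)=\frac{4+T^L+T^U-I^L-I^U-F^L-F^U}{6},\quad a(P)=\frac{T^L+T^U-F^L-F^U}{2},\quad c(P)=\frac{T^L+T^U}{2}.$$ Compare $P_1,P_2\in\mathcal M_{int}$ lexicographically by $(s,a,c)$: $P_1>P_2$ (resp. $P_1<P_2$) if $s(P_1)>s(P_2)$ (resp. $<$), or $s$ values are equal and $a(P_1)>a(P_2)$ (resp. $<$), or $s$ and $a$ values are equal and $c(P_1)>c(P_2)$ (resp. $<$). Then for any $P_1,P_2\in\mathcal M_{int}$, either $P_1>P_2$, or $P_1<P_2$, or $P_1$ and $P_2$ are neutrosophically equal, meaning $\frac{T_1^L+T_1^U}{2}=\frac{T_2^L+T_2^U}{2}$, $\frac{I_1^L+I_1^U}{2}=\frac{I_2^L+I_2^U}{2}$ and $\frac{F_1^L+F_1^U}{2}=\frac{F_2^L+F_2^U}{2}$ (the corresponding component intervals have the same midpoints). Thus $s,a,c$ determine a total order on $\mathcal M_{int}$ up to neutrosophic equality.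
   Context: $s,a,c$ are the paper's new interval neutrosophic score, accuracy and certainty functions; two intervals are called neutrosophically equal when they have the same midpoint. *)

theory Defs
  imports "HOL-Analysis.Analysis"
begin

text \<open>An interval neutrosophic component: a nonempty interval (open, half-open
or closed, possibly degenerate) contained in [0,1]. For real sets,
is_interval is exactly the order-convexity property.\<close>
definition unit_subinterval :: "real set \<Rightarrow> bool" where
  "unit_subinterval S \<longleftrightarrow> S \<noteq> {} \<and> S \<subseteq> {0..1} \<and> is_interval S"

type_synonym inn = "real set \<times> real set \<times> real set"

definition M_int :: "inn set" where
  "M_int = {(T, I, F). unit_subinterval T \<and> unit_subinterval I \<and> unit_subinterval F}"

definition score :: "inn \<Rightarrow> real" where
  "score P = (case P of (T, I, F) \<Rightarrow>
     (4 + Inf T + Sup T - Inf I - Sup I - Inf F - Sup F) / 6)"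

definition accuracy :: "inn \<Rightarrow> real" where
  "accuracy P = (case P of (T, I, F) \<Rightarrow> (Inf T + Sup T - Inf F - Sup F) / 2)"

definition certainty :: "inn \<Rightarrow> real" where
  "certainty P = (case P of (T, I, F) \<Rightarrow> (Inf T + Sup T) / 2)"

definition inn_greater :: "inn \<Rightarrow> inn \<Rightarrow> bool" where
  "inn_greater P1 P2 \<longleftrightarrow>
     score P1 > score P2 \<or>
     (score P1 = score P2 \<and> accuracy P1 > accuracy P2) \<or>
     (score P1 = score P2 \<and> accuracy P1 = accuracy P2 \<and> certainty P1 > certainty P2)"

definition inn_less :: "inn \<Rightarrow> inn \<Rightarrow> bool" where
  "inn_less P1 P2 \<longleftrightarrow>
     score P1 < score P2 \<or>
     (score P1 = score P2 \<and> accuracy P1 < accuracy P2) \<or>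
     (score P1 = score P2 \<and> accuracy P1 = accuracy P2 \<and> certainty P1 < certainty P2)"

definition midpoint_of :: "real set \<Rightarrow> real" where
  "midpoint_of S = (Inf S + Sup S) / 2"

definition neut_equal :: "inn \<Rightarrow> inn \<Rightarrow> bool" where
  "neut_equal P1 P2 \<longleftrightarrow> (case P1 of (T1, I1, F1) \<Rightarrow> case P2 of (T2, I2, F2) \<Rightarrow>
     midpoint_of T1 = midpoint_of T2 \<and> midpoint_of I1 = midpoint_of I2 \<and>
     midpoint_of F1 = midpoint_of F2)"

end

theory Submission
  imports Defs
begin

text \<open>All three functions depend on a triplet only through the midpoints of its components,
and the map from the midpoints \<open>(t, i, f)\<close> to \<open>(s, a, c)\<close> is invertible:
\<open>t = c\<close>, \<open>f = c - a\<close>, \<open>i = 2 + t - f - 3 s\<close>. Hence equal \<open>(s, a, c)\<close> means neutrosophic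
equality, and the lexicographic order on \<open>(s, a, c)\<close> is total.\<close>

lemma score_midpoints:
  "score (T, I, F) = (2 + midpoint_of T - midpoint_of I - midpoint_of F) / 3"
  by (simp add: score_def midpoint_of_def field_simps)

lemma accuracy_midpoints: "accuracy (T, I, F) = midpoint_of T - midpoint_of F"
  by (simp add: accuracy_def midpoint_of_def field_simps)

lemma certainty_midpoint: "certainty (T, I, F) = midpoint_of T"
  by (simp add: certainty_def midpoint_of_def)

lemma neut_equal_iff_score_accuracy_certainty_eq:
  "neut_equal P1 P2 \<longleftrightarrow>
     score P1 = score P2 \<and> accuracy P1 = accuracy P2 \<and> certainty P1 = certainty P2"
proof -
  obtain T1 I1 F1 T2 I2 F2 where "P1 = (T1, I1, F1)" and "P2 = (T2, I2, F2)"
    by (cases P1, cases P2) auto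
  then show ?thesis
    by (simp add: neut_equal_def score_midpoints accuracy_midpoints certainty_midpoint)
      linarith
qed

lemma inn_greater_or_less_or_score_accuracy_certainty_eq:
  "inn_greater P1 P2 \<or> inn_less P1 P2 \<or>
     score P1 = score P2 \<and> accuracy P1 = accuracy P2 \<and> certainty P1 = certainty P2"
  unfolding inn_greater_def inn_less_def by linarith

theorem theorem10p4:
  assumes "P1 \<in> M_int" and "P2 \<in> M_int"
  shows "inn_greater P1 P2 \<or> inn_less P1 P2 \<or> neut_equal P1 P2"
  using inn_greater_or_less_or_score_accuracy_certainty_eq
  by (simp add: neut_equal_iff_score_accuracy_certainty_eq)

end
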